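(* Under the standing assumptions in the context, with $h^E$, $h^S$ defined as there, for all $r\in[r_0,r_1]$, $$0\le h^S(r)-h^E(r)\le \frac{g}{u_0^2-g h_0}\,\big(h^E(r)\big)^2\,\big(1-\nu(r)\big).$$ In particular there is a constant $c>0$ (namely $c=g/(u_0^2-gh_0)$) with $h^S(r)-h^E(r)\le c\,(h^E(r))^2(1-\nu(r))$ for all $r\in[r_0,r_1]$.
   Context: Standing assumptions and notation. Let $g>0$, $0<r_0<r_1$, and let $f\in C^1([r_0,r_1])$ with $f'(r)\le 0$ for all $r\in[r_0,r_1]$, $f'(r_0)=0$, and $f(r_0)>f(r_1)$. Set $\nu(r)=1/\sqrt{1+(f'(r))^2}$. Let $h_0>0$, $u_0>0$ with $u_0^2/(g h_0)>1$. Define $q_e=\tfrac12 u_0^2+g\,(f(r_0)+h_0)$, $q_w=r_0h_0u_0$, $\eta(r)=q_e-g f(r)$, and $$\mathcal P^S_r(h)=g h^3-\eta(r)h^2+\frac{q_w^2}{2r^2},\qquad \mathcal P^E_r(h)=g\,\nu(r)\, h^3-\eta(r)h^2+\frac{q_w^2}{2r^2}.$$ Let $\nu^S(r)=1$, $\nu^E(r)=\nu(r)$, $h^M_\star(r)=\dfrac{2\eta(r)}{3g\,\nu^M(r)}$ for $M\in\{E,S\}$. For each $r\in[r_0,r_1]$ and $M\in\{E,S\}$, $h^M(r)$ denotes the unique root of $\mathcal P^M_r$ in the interval $(0,h^M_\star(r))$ (this root exists and $h^M$ is continuous with $h^M(r_0)=h_0$). *)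

theory Defs
  imports "HOL-Analysis.Analysis"
begin

definition nu :: "(real \<Rightarrow> real) \<Rightarrow> real \<Rightarrow> real" where
  "nu f' r = 1 / sqrt (1 + (f' r)^2)"

definition q_e :: "real \<Rightarrow> (real \<Rightarrow> real) \<Rightarrow> real \<Rightarrow> real \<Rightarrow> real \<Rightarrow> real" where
  "q_e g f r0 h0 u0 = u0^2 / 2 + g * (f r0 + h0)"

definition q_w :: "real \<Rightarrow> real \<Rightarrow> real \<Rightarrow> real" where
  "q_w r0 h0 u0 = r0 * h0 * u0"

definition eta :: "real \<Rightarrow> (real \<Rightarrow> real) \<Rightarrow> real \<Rightarrow> real \<Rightarrow> real \<Rightarrow> real \<Rightarrow> real" where
  "eta g f r0 h0 u0 r = q_e g f r0 h0 u0 - g * f r"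

definition polyM :: "real \<Rightarrow> (real \<Rightarrow> real) \<Rightarrow> real \<Rightarrow> real \<Rightarrow> real \<Rightarrow> real \<Rightarrow> real \<Rightarrow> real \<Rightarrow> real" where
  "polyM g f r0 h0 u0 nuM r h =
     g * nuM * h^3 - eta g f r0 h0 u0 r * h^2 + (q_w r0 h0 u0)^2 / (2 * r^2)"

definition PS :: "real \<Rightarrow> (real \<Rightarrow> real) \<Rightarrow> real \<Rightarrow> real \<Rightarrow> real \<Rightarrow> real \<Rightarrow> real \<Rightarrow> real" where
  "PS g f r0 h0 u0 r h = polyM g f r0 h0 u0 1 r h"

definition PE :: "real \<Rightarrow> (real \<Rightarrow> real) \<Rightarrow> (real \<Rightarrow> real) \<Rightarrow> real \<Rightarrow> real \<Rightarrow> real \<Rightarrow> real \<Rightarrow> real \<Rightarrow> real" where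
  "PE g f f' r0 h0 u0 r h = polyM g f r0 h0 u0 (nu f' r) r h"

definition hstarS :: "real \<Rightarrow> (real \<Rightarrow> real) \<Rightarrow> real \<Rightarrow> real \<Rightarrow> real \<Rightarrow> real \<Rightarrow> real" where
  "hstarS g f r0 h0 u0 r = 2 * eta g f r0 h0 u0 r / (3 * g)"

definition hstarE :: "real \<Rightarrow> (real \<Rightarrow> real) \<Rightarrow> (real \<Rightarrow> real) \<Rightarrow> real \<Rightarrow> real \<Rightarrow> real \<Rightarrow> real \<Rightarrow> real" where
  "hstarE g f f' r0 h0 u0 r = 2 * eta g f r0 h0 u0 r / (3 * g * nu f' r)"

definition hS :: "real \<Rightarrow> (real \<Rightarrow> real) \<Rightarrow> real \<Rightarrow> real \<Rightarrow> real \<Rightarrow> real \<Rightarrow> real" where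
  "hS g f r0 h0 u0 r =
     (THE h. 0 < h \<and> h < hstarS g f r0 h0 u0 r \<and> PS g f r0 h0 u0 r h = 0)"

definition hE :: "real \<Rightarrow> (real \<Rightarrow> real) \<Rightarrow> (real \<Rightarrow> real) \<Rightarrow> real \<Rightarrow> real \<Rightarrow> real \<Rightarrow> real \<Rightarrow> real" where
  "hE g f f' r0 h0 u0 r =
     (THE h. 0 < h \<and> h < hstarE g f f' r0 h0 u0 r \<and> PE g f f' r0 h0 u0 r h = 0)"

end

theory Submission
  imports Defs
begin

text \<open>Both depths are roots of a cubic \<open>c h\<^sup>3 - \<eta> h\<^sup>2 + K\<close> on the branch \<open>(0, 2\<eta>/(3c))\<close>
where it is strictly decreasing; the two cubics differ only in \<open>c = g\<close> versus \<open>c = g \<nu>\<close>.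
Subtracting the two root equations gives \<open>(h\<^sup>S - h\<^sup>E) D = g (1 - \<nu>) (h\<^sup>E)\<^sup>3\<close>, where
\<open>D = \<eta> (h\<^sup>E + h\<^sup>S) - g ((h\<^sup>E)\<^sup>2 + h\<^sup>E h\<^sup>S + (h\<^sup>S)\<^sup>2)\<close> is bounded below by \<open>h\<^sup>E (2\<eta> - 3 g h\<^sup>S)\<close>.
Since the bed only descends, \<open>\<eta> \<ge> u\<^sub>0\<^sup>2/2 + g h\<^sub>0\<close>, and since the channel widens the constant
term only shrinks; so \<open>h\<^sup>S \<le> h\<^sub>0\<close> and \<open>2\<eta> - 3 g h\<^sup>S \<ge> u\<^sub>0\<^sup>2 - g h\<^sub>0\<close>, which is positive because
the inflow is supercritical.\<close>

definition cubic :: "real \<Rightarrow> real \<Rightarrow> real \<Rightarrow> real \<Rightarrow> real" where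
  "cubic c e K h = c * h^3 - e * h^2 + K"

lemma cubic_strict_antimono:
  assumes c: "c > 0" and ab: "0 < a" "a < b" and b: "b \<le> 2 * e / (3 * c)"
  shows "cubic c e K b < cubic c e K a"
proof -
  have cb: "3 * c * b \<le> 2 * e" using b c by (simp add: field_simps)
  then have e: "e > 0" using c ab by (smt (verit) mult_pos_pos)
  have "a * a < a * b" "a * b < b * b" using ab by simp_all
  then have "2 * (a^2 + a*b + b^2) < 3 * b * (a + b)"
    by (simp add: power2_eq_square algebra_simps)
  then have "2 * e * (a^2 + a*b + b^2) < 3 * b * (e * (a + b))"
    using mult_strict_left_mono[OF _ e] by (metis (no_types, lifting) mult.assoc mult.left_commute)
  moreover have "3 * b * (c * (a^2 + a*b + b^2)) \<le> 2 * e * (a^2 + a*b + b^2)"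
    using mult_right_mono[OF cb, of "a^2 + a*b + b^2"] ab by (simp add: algebra_simps)
  ultimately have "3 * b * (c * (a^2 + a*b + b^2)) < 3 * b * (e * (a + b))"
    by linarith
  then have "c * (a^2 + a*b + b^2) < e * (a + b)"
    using ab by simp
  then have "(b - a) * (e * (a + b) - c * (a^2 + a*b + b^2)) > 0"
    using ab by simp
  moreover have "cubic c e K a - cubic c e K b = (b - a) * (e * (a + b) - c * (a^2 + a*b + b^2))"
    unfolding cubic_def by (simp add: algebra_simps power2_eq_square power3_eq_cube)
  ultimately show ?thesis by linarith
qed

lemma cubic_root_le:
  assumes "c > 0" "0 < x" "cubic c e K x \<le> 0"
    and "b \<le> 2 * e / (3 * c)" "cubic c e K b = 0"
  shows "b \<le> x"
  using cubic_strict_antimono[of c x b e K] assms by force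

lemma cubic_unique_root:
  assumes c: "c > 0" and e: "e > 0" and K: "K > 0" and disc: "27 * c^2 * K < 4 * e^3"
  shows "\<exists>!h. 0 < h \<and> h < 2 * e / (3 * c) \<and> cubic c e K h = 0"
proof -
  define m where "m = 2 * e / (3 * c)"
  have m: "m > 0" using c e by (simp add: m_def)
  have "cubic c e K m = K - 4 * e^3 / (27 * c^2)"
    using c by (simp add: m_def cubic_def field_simps power2_eq_square power3_eq_cube)
  also have "\<dots> < 0"
    using c disc by (simp add: field_simps)
  finally have neg: "cubic c e K m < 0" .
  have pos: "cubic c e K 0 > 0" using K by (simp add: cubic_def)
  have "continuous_on {0..m} (cubic c e K)"
    unfolding cubic_def[abs_def] by (intro continuous_intros)
  then obtain x where x: "0 \<le> x" "x \<le> m" "cubic c e K x = 0"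
    using IVT2'[of "cubic c e K" m 0 0] neg pos m by auto
  then have root: "0 < x \<and> x < m \<and> cubic c e K x = 0"
    using neg pos by (auto simp: le_less)
  moreover have "y = x" if "0 < y \<and> y < m \<and> cubic c e K y = 0" for y
    using cubic_root_le[of c x e K y] cubic_root_le[of c y e K x] that root c
    by (simp add: m_def)
  ultimately show ?thesis unfolding m_def by blast
qed

lemma cubic_roots_gap:
  assumes g: "g > 0" and nu: "0 < \<nu>" "\<nu> \<le> 1"
    and a: "0 < a" "a < 2 * e / (3 * (g * \<nu>))" "cubic (g * \<nu>) e K a = 0"
    and b: "0 < b" "b < 2 * e / (3 * g)" "cubic g e K b = 0"
    and L: "L > 0" "L \<le> 2 * e - 3 * g * b"
  shows "0 \<le> b - a \<and> b - a \<le> g / L * a^2 * (1 - \<nu>)"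
proof -
  have "cubic (g * \<nu>) e K b = - (g * (1 - \<nu>) * b^3)"
    using b(3) by (simp add: cubic_def algebra_simps)
  also have "\<dots> \<le> 0" using g nu b by simp
  finally have ab: "a \<le> b"
    using cubic_root_le[of "g * \<nu>" b e K a] g nu a b by simp
  define D where "D = e * (a + b) - g * (a^2 + a*b + b^2)"
  have gap: "(b - a) * D = g * (1 - \<nu>) * a^3"
    using a(3) b(3) unfolding D_def cubic_def
    by (simp add: algebra_simps power2_eq_square power3_eq_cube)
  have "g * (b - a) \<le> g * b" "0 < g * b" "3 * (g * b) < 2 * e"
    using g a b by (simp_all add: field_simps)
  then have "e - g * (b - a) \<ge> 0" by linarith
  moreover have "D - a * (2 * e - 3 * g * b) = (b - a) * (e - g * (b - a))"
    unfolding D_def by (simp add: algebra_simps power2_eq_square)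
  ultimately have "a * L \<le> D"
    using ab mult_left_mono[OF L(2), of a] a by (smt (verit) mult_nonneg_nonneg)
  then have "a * ((b - a) * L) \<le> a * (g * (1 - \<nu>) * a^2)"
    using gap mult_left_mono[of "a * L" D "b - a"] ab
    by (simp add: algebra_simps power3_eq_cube power2_eq_square)
  then have "(b - a) * L \<le> g * (1 - \<nu>) * a^2" using a by simp
  then show ?thesis using ab L by (simp add: field_simps)
qed

lemma le_left_endpoint_of_deriv_nonpos:
  fixes f :: "real \<Rightarrow> real"
  assumes deriv: "\<forall>x\<in>{a..b}. (f has_real_derivative f' x) (at x within {a..b})"
    and nonpos: "\<forall>x\<in>{a..b}. f' x \<le> 0"
    and x: "x \<in> {a..b}"
  shows "f x \<le> f a"
proof (rule DERIV_nonpos_imp_decreasing_open[of a x f])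
  show "a \<le> x" using x by simp
  fix y assume y: "a < y" "y < x"
  then have "at y within {a..b} = at y" using x by (intro at_within_Icc_at) auto
  then show "\<exists>z. (f has_real_derivative z) (at y) \<and> z \<le> 0"
    using deriv nonpos y x by (metis atLeastAtMost_iff less_imp_le order_trans)
next
  have "continuous_on {a..b} f"
    using deriv by (metis DERIV_continuous continuous_on_eq_continuous_within)
  then show "continuous_on {a..x} f" by (rule continuous_on_subset) (use x in auto)
qed

lemma nu_pos: "0 < nu f' r"
  by (simp add: nu_def add_pos_nonneg)

lemma nu_le_one: "nu f' r \<le> 1"
  by (simp add: nu_def add_pos_nonneg divide_le_eq)

text \<open>\<open>u\<^sub>0\<^sup>2/2 + g h\<^sub>0\<close> and \<open>h\<^sub>0\<^sup>2 u\<^sub>0\<^sup>2/2\<close> are \<open>\<eta>\<close> and the constant term at \<open>r = r\<^sub>0\<close>.\<close>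

lemma inflow_root:
  fixes g h0 u0 :: real
  shows "cubic g (u0^2 / 2 + g * h0) (h0^2 * u0^2 / 2) h0 = 0"
  by (simp add: cubic_def algebra_simps power2_eq_square power3_eq_cube)

lemma inflow_discriminant:
  fixes g h0 u0 :: real
  assumes "g > 0" "h0 > 0" "g * h0 < u0^2"
  shows "27 * g^2 * (h0^2 * u0^2 / 2) < 4 * (u0^2 / 2 + g * h0)^3"
proof -
  define x y where "x = u0^2" and "y = g * h0"
  have "y > 0" "y < x" using assms by (simp_all add: x_def y_def)
  then have "(x - y)^2 * (x + 8 * y) > 0" by simp
  moreover have "(x + 2 * y)^3 - 27 * x * y^2 = (x - y)^2 * (x + 8 * y)"
    by (simp add: algebra_simps power2_eq_square power3_eq_cube)
  ultimately have "27 * x * y^2 < (x + 2 * y)^3" by linarith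
  then show ?thesis
    by (simp add: x_def y_def field_simps power2_eq_square power3_eq_cube)
qed

lemma cubic_roots_gap_from_inflow:
  fixes g h0 u0 \<nu> e K :: real
  defines "hS' \<equiv> THE h. 0 < h \<and> h < 2 * e / (3 * g) \<and> cubic g e K h = 0"
    and "hE' \<equiv> THE h. 0 < h \<and> h < 2 * e / (3 * (g * \<nu>)) \<and> cubic (g * \<nu>) e K h = 0"
  assumes g: "g > 0" and h0: "h0 > 0" and sup: "g * h0 < u0^2"
    and nu: "0 < \<nu>" "\<nu> \<le> 1"
    and e: "u0^2 / 2 + g * h0 \<le> e" and K: "0 < K" "K \<le> h0^2 * u0^2 / 2"
  shows "0 \<le> hS' - hE' \<and> hS' - hE' \<le> g / (u0^2 - g * h0) * hE'^2 * (1 - \<nu>)"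
proof -
  have "0 < u0^2 / 2 + g * h0" using g h0 by (simp add: add_nonneg_pos)
  then have epos: "e > 0" using e by linarith
  have "(u0^2 / 2 + g * h0)^3 \<le> e^3"
    using e \<open>0 < u0^2 / 2 + g * h0\<close> by (intro power_mono) auto
  moreover have "27 * g^2 * K \<le> 27 * g^2 * (h0^2 * u0^2 / 2)"
    using K(2) by (intro mult_left_mono) auto
  ultimately have discS: "27 * g^2 * K < 4 * e^3"
    using inflow_discriminant[OF g h0 sup] by linarith
  have "\<nu>^2 * (g^2 * K) \<le> 1 * (g^2 * K)"
    using nu K by (intro mult_right_mono) (auto simp: power_le_one)
  then have discE: "27 * (g * \<nu>)^2 * K < 4 * e^3"
    using discS by (simp add: power_mult_distrib algebra_simps)
  have b: "0 < hS' \<and> hS' < 2 * e / (3 * g) \<and> cubic g e K hS' = 0"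
    unfolding hS'_def by (rule theI') (rule cubic_unique_root[OF g epos K(1) discS])
  have a: "0 < hE' \<and> hE' < 2 * e / (3 * (g * \<nu>)) \<and> cubic (g * \<nu>) e K hE' = 0"
    unfolding hE'_def
    by (rule theI') (rule cubic_unique_root[OF mult_pos_pos[OF g nu(1)] epos K(1) discE])
  have "cubic g e K h0 \<le> cubic g (u0^2 / 2 + g * h0) (h0^2 * u0^2 / 2) h0"
    using mult_right_mono[OF e, of "h0^2"] K unfolding cubic_def by simp
  then have "hS' \<le> h0"
    using cubic_root_le[of g h0 e K hS'] inflow_root g h0 b by simp
  then have L: "u0^2 - g * h0 \<le> 2 * e - 3 * g * hS'"
    using e mult_left_mono[of hS' h0 g] g by linarith
  show ?thesis
    using cubic_roots_gap[of g \<nu> hE' e K hS' "u0^2 - g * h0"] g nu a b L sup by simp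
qed

theorem proposition1:
  fixes g r0 r1 h0 u0 :: real and f f' :: "real \<Rightarrow> real"
  assumes g: "g > 0"
    and r: "0 < r0" "r0 < r1"
    and fderiv: "\<forall>r\<in>{r0..r1}. (f has_real_derivative f' r) (at r within {r0..r1})"
    and fcont: "continuous_on {r0..r1} f'"
    and fmono: "\<forall>r\<in>{r0..r1}. f' r \<le> 0"
    and f'r0: "f' r0 = 0"
    and fdrop: "f r0 > f r1"
    and h0: "h0 > 0" and u0: "u0 > 0"
    and froude: "u0^2 / (g * h0) > 1"
  shows "\<forall>r\<in>{r0..r1}.
           0 \<le> hS g f r0 h0 u0 r - hE g f f' r0 h0 u0 r \<and>
           hS g f r0 h0 u0 r - hE g f f' r0 h0 u0 r
             \<le> g / (u0^2 - g * h0) * (hE g f f' r0 h0 u0 r)^2 * (1 - nu f' r)"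
proof
  fix r assume rr: "r \<in> {r0..r1}"
  define e K where "e = eta g f r0 h0 u0 r" and "K = (q_w r0 h0 u0)^2 / (2 * r^2)"
  have "f r \<le> f r0" by (rule le_left_endpoint_of_deriv_nonpos[OF fderiv fmono rr])
  then have "u0^2 / 2 + g * h0 \<le> e"
    using g by (simp add: e_def eta_def q_e_def algebra_simps)
  moreover have "0 < K" "K \<le> h0^2 * u0^2 / 2"
    using r rr h0 u0 power_mono[of r0 r 2]
    by (auto simp: K_def q_w_def power_mult_distrib field_simps)
  moreover have "g * h0 < u0^2" using froude g h0 by (simp add: field_simps)
  moreover have "hS g f r0 h0 u0 r = (THE h. 0 < h \<and> h < 2 * e / (3 * g) \<and> cubic g e K h = 0)"
    by (simp add: hS_def hstarS_def PS_def polyM_def cubic_def e_def K_def)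
  moreover have "hE g f f' r0 h0 u0 r = (THE h. 0 < h \<and> h < 2 * e / (3 * (g * nu f' r))
                   \<and> cubic (g * nu f' r) e K h = 0)"
    by (simp add: hE_def hstarE_def PE_def polyM_def cubic_def e_def K_def mult.assoc)
  ultimately show "0 \<le> hS g f r0 h0 u0 r - hE g f f' r0 h0 u0 r \<and>
           hS g f r0 h0 u0 r - hE g f f' r0 h0 u0 r
             \<le> g / (u0^2 - g * h0) * (hE g f f' r0 h0 u0 r)^2 * (1 - nu f' r)"
    using cubic_roots_gap_from_inflow[OF g h0 _ nu_pos nu_le_one] by simp
qed

end
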